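(* Let $\varphi\colon Y\to X$ be a torus-equivariant embedding of a normal toric variety $Y$ into a smooth toric variety $X$ with no torus factors, let $L\subseteq\mathbb{Z}^n$ be the associated lattice, and let $\psi\colon L_{\mathbb{R}}\to\mathbb{Z}^n$ be the ceiling stratification with $L_{\mathbb{R}}$ given its standard cell structure. Then (i) the real torus $T_\varphi$ equals $L_{\mathbb{R}}/L$ and the cell structure on it induced from the standard cell structure of $L_{\mathbb{R}}$ coincides with the stratification of $T_\varphi$ by the toric arrangement of Hanlon–Hicks–Lazarev; and (ii) the line bundle that the Hanlon–Hicks–Lazarev construction assigns to a cell $\sigma'\subseteq L_{\mathbb{R}}/L$ is $\mathcal{O}_X(-\psi(\sigma))$, where $\sigma\subseteq L_{\mathbb{R}}$ is any cell representing $\sigma'$.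
   Context: Let $X$ be a smooth toric variety with no torus factors whose fan has $n$ rays with primitive generators $\bm u_1,\dots,\bm u_n\in N_X$, and $Y$ a normal toric variety with a torus-equivariant embedding $\varphi\colon Y\to X$, corresponding to an injective $\mathbb{Z}$-linear map $\overline\varphi\colon N_Y\to N_X$ of one-parameter-subgroup lattices with dual surjection $\overline\varphi^*\colon M_X\to M_Y$ of character lattices. Set $L=\ker\overline\varphi^*\subseteq M_X$, embedded in $\mathbb{Z}^n$ by $\nu(\bm m)=(\bm u_1\cdot\bm m,\dots,\bm u_n\cdot\bm m)$; $\mathbb{Z}^n$ is identified with the group of torus-invariant divisors of $X$ and $\mathcal{O}_X(\bm u)$ denotes the corresponding line bundle. $L_{\mathbb{R}}=L\otimes\mathbb{R}\subseteq\mathbb{R}^n$ has the standard cell structure: the polyhedral cell structure from the periodic arrangement of affine hyperplanes $\{\bm p\in L_{\mathbb{R}}:p_i=j\}$, $1\le i\le n$, $j\in\mathbb{Z}$ (equivalently $\{\bm q: \bm u_i\cdot\bm q=j\}$); it descends to a cell structure on $L_{\mathbb{R}}/L$. The ceiling stratification is $\psi(\bm p)=(\lceil p_1\rceil,\dots,\lceil p_n\rceil)$, constant on open cells. The Hanlon–Hicks–Lazarev (HHL) data: the real torus $T_\varphi$ is the kernel of the induced map $(M_X\otimes\mathbb{R})/M_X\to(M_Y\otimes\mathbb{R})/M_Y$; it is stratified by the toric arrangement of subtori cut out by the conditions $\bm u_i\cdot\bm q\in\mathbb{Z}$, $1\le i\le n$; and to each point $\bm q\in M_X\otimes\mathbb{R}$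 HHL assign the line bundle $\mathcal{O}_X\big((\lfloor-\bm u_1\cdot\bm q\rfloor,\dots,\lfloor-\bm u_n\cdot\bm q\rfloor)\big)$, which is constant on strata. *)

theory Defs
  imports "HOL-Analysis.Analysis"
begin

text \<open>Lattices: M_X = int^'d (characters of X), N_X = int^'d, M_Y = int^'e,
 rays indexed by a finite type 'r (so n = CARD('r)), Z^n = int^'r (torus-invariant divisors).\<close>

definition ofintv :: "int^'a \<Rightarrow> real^'a" where
  "ofintv m = (\<chi> k. of_int (m $ k))"

definition intvecs :: "(real^'a) set" where
  "intvecs = {x. \<forall>k. x $ k \<in> \<int>}"

definition dotR :: "int^'d \<Rightarrow> real^'d \<Rightarrow> real" where
  "dotR u q = (\<Sum>k\<in>UNIV. of_int (u $ k) * q $ k)"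

definition dotZ :: "int^'d \<Rightarrow> int^'d \<Rightarrow> int" where
  "dotZ u m = (\<Sum>k\<in>UNIV. u $ k * m $ k)"

definition nuZ :: "('r \<Rightarrow> int^'d) \<Rightarrow> int^'d \<Rightarrow> int^'r" where
  "nuZ u m = (\<chi> i. dotZ (u i) m)"

definition nuR :: "('r \<Rightarrow> int^'d) \<Rightarrow> real^'d \<Rightarrow> real^'r" where
  "nuR u q = (\<chi> i. dotR (u i) q)"

text \<open>the dual map phi^* : M_X \<rightarrow> M_Y given by an integer matrix P, and its real extension\<close>
definition PZ :: "int^'d^'e \<Rightarrow> int^'d \<Rightarrow> int^'e" where
  "PZ P m = (\<chi> j. \<Sum>k\<in>UNIV. P $ j $ k * m $ k)"

definition PR :: "int^'d^'e \<Rightarrow> real^'d \<Rightarrow> real^'e" where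
  "PR P q = (\<chi> j. \<Sum>k\<in>UNIV. of_int (P $ j $ k) * q $ k)"

definition Lat :: "int^'d^'e \<Rightarrow> (int^'d) set" where
  "Lat P = {m. PZ P m = 0}"

text \<open>L embedded in R^n via nu, and L_R = L tensor R as the real span of it in R^n\<close>
definition Lnu :: "('r \<Rightarrow> int^'d) \<Rightarrow> int^'d^'e \<Rightarrow> (real^'r) set" where
  "Lnu u P = (\<lambda>m. ofintv (nuZ u m)) ` Lat P"

definition LR :: "('r \<Rightarrow> int^'d) \<Rightarrow> int^'d^'e \<Rightarrow> (real^'r) set" where
  "LR u P = span (Lnu u P)"

text \<open>Open cells of the standard cell structure on L_R: points with the same position
  relative to every hyperplane p_i = j (j integer), i.e. same floor and ceiling in each coordinate.\<close>
definition std_cell :: "('r \<Rightarrow> int^'d) \<Rightarrow> int^'d^'e \<Rightarrow> real^'r \<Rightarrow> (real^'r) set" where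
  "std_cell u P p = {p' \<in> LR u P. \<forall>i. \<lceil>p' $ i\<rceil> = \<lceil>p $ i\<rceil> \<and> \<lfloor>p' $ i\<rfloor> = \<lfloor>p $ i\<rfloor>}"

definition psi :: "real^'r \<Rightarrow> int^'r" where
  "psi p = (\<chi> i. \<lceil>p $ i\<rceil>)"

text \<open>Concrete model of the real torus (M_X tensor R)/M_X: q \<mapsto> (exp(2 pi i q_k))_k.\<close>
definition Etor :: "real^'d \<Rightarrow> complex^'d" where
  "Etor q = (\<chi> k. cis (2 * pi * q $ k))"

text \<open>T_phi = kernel of (M_X)_R/M_X \<rightarrow> (M_Y)_R/M_Y\<close>
definition Tphi :: "int^'d^'e \<Rightarrow> (complex^'d) set" where
  "Tphi P = Etor ` {q. PR P q \<in> intvecs}"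

definition arr_subtorus :: "('r \<Rightarrow> int^'d) \<Rightarrow> 'r \<Rightarrow> (complex^'d) set" where
  "arr_subtorus u i = Etor ` {q. dotR (u i) q \<in> \<int>}"

definition arr_type :: "('r \<Rightarrow> int^'d) \<Rightarrow> complex^'d \<Rightarrow> 'r set" where
  "arr_type u z = {i. z \<in> arr_subtorus u i}"

definition hhl_stratum :: "('r \<Rightarrow> int^'d) \<Rightarrow> int^'d^'e \<Rightarrow> complex^'d \<Rightarrow> (complex^'d) set" where
  "hhl_stratum u P z =
     connected_component_set {w \<in> Tphi P. arr_type u w = arr_type u z} z"

definition hhl_divisor :: "('r \<Rightarrow> int^'d) \<Rightarrow> real^'d \<Rightarrow> int^'r" where
  "hhl_divisor u q = (\<chi> i. \<lfloor>- dotR (u i) q\<rfloor>)"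

text \<open>O_X(D) \<cong> O_X(D') iff D - D' is principal, i.e. in nu(M_X)\<close>
definition same_line_bundle :: "('r \<Rightarrow> int^'d) \<Rightarrow> int^'r \<Rightarrow> int^'r \<Rightarrow> bool" where
  "same_line_bundle u D D' \<longleftrightarrow> (\<exists>m. D - D' = nuZ u m)"

definition primitive :: "int^'d \<Rightarrow> bool" where
  "primitive v \<longleftrightarrow> v \<noteq> 0 \<and> (\<forall>c. (\<forall>k. c dvd v $ k) \<longrightarrow> is_unit c)"

definition cone_of :: "('r \<Rightarrow> int^'d) \<Rightarrow> 'r set \<Rightarrow> (real^'d) set" where
  "cone_of u \<sigma> = convex_cone hull ((\<lambda>i. ofintv (u i)) ` \<sigma>)"

text \<open>A smooth fan with ray generators u (cones given by their sets of rays):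
  rays are 1-cones, closed under faces, cones meet in common faces, and the generators of
  each cone are part of a Z-basis of N_X.\<close>
definition smooth_fan :: "('r \<Rightarrow> int^'d) \<Rightarrow> 'r set set \<Rightarrow> bool" where
  "smooth_fan u \<Sigma> \<longleftrightarrow>
     (\<forall>i. {i} \<in> \<Sigma>) \<and>
     (\<forall>\<sigma>\<in>\<Sigma>. \<forall>\<tau>. \<tau> \<subseteq> \<sigma> \<longrightarrow> \<tau> \<in> \<Sigma>) \<and>
     (\<forall>\<sigma>\<in>\<Sigma>. \<forall>\<tau>\<in>\<Sigma>. cone_of u \<sigma> \<inter> cone_of u \<tau> = cone_of u (\<sigma> \<inter> \<tau>)) \<and>
     (\<forall>\<sigma>\<in>\<Sigma>. \<exists>(B::int^'d^'d) C f. B ** C = mat 1 \<and> inj_on f \<sigma> \<and> (\<forall>i\<in>\<sigma>. B $ f i = u i))"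

end

theory Submission
  imports Defs
begin

(* Because the rays span N_X, nu_R is injective; composing a linear left inverse of it with
   the exponential Etor gives a chart theta of T_phi on L_R. Surjectivity of phi^* provides an
   integral linear retraction onto the kernel of phi^*_R, so this kernel is spanned by L and
   every point of T_phi lifts into it. Under theta, the arrangement type of theta p is the set of
   integral coordinates of p. The image of a (convex) cell is connected, and it is open in its
   type stratum: Etor has continuous local inverses, so nearby points of the same type lift to
   nearby points of L_R with the same integral coordinates, hence the same floors and ceilings.
   Since L permutes the cells, cell images are disjoint or equal, so each image is a connected
   component of its stratum. Finally floor(-p_i) = -ceil(p_i), and changing the lift by an
   integral vector m changes the HHL divisor by the principal divisor nu(m). *)

lemma openin_top_of_set_eventually:
  assumes "A \<subseteq> S" and "\<And>a. a \<in> A \<Longrightarrow> eventually (\<lambda>x. x \<in> S \<longrightarrow> x \<in> A) (nhds a)"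
  shows "openin (top_of_set S) A"
  unfolding openin_subopen[of _ A]
proof
  fix a assume "a \<in> A"
  then obtain T where "open T" "a \<in> T" "\<forall>x\<in>T. x \<in> S \<longrightarrow> x \<in> A"
    using assms(2) by (auto simp: eventually_nhds)
  then show "\<exists>T'. openin (top_of_set S) T' \<and> a \<in> T' \<and> T' \<subseteq> A"
    using \<open>a \<in> A\<close> assms(1) by (intro exI[of _ "S \<inter> T"]) (auto intro: openin_open_Int)
qed

lemma connected_component_eq_clopen:
  assumes "connected A" "a \<in> A" "A \<subseteq> S"
    and "openin (top_of_set S) A" "openin (top_of_set S) (S - A)"
  shows "connected_component_set S a = A"
proof (rule connected_component_unique[OF assms(2,3,1)])
  fix C assume "a \<in> C" "C \<subseteq> S" "connected C"
  obtain T T' where "open T" "A = S \<inter> T" "open T'" "S - A = S \<inter> T'"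
    using assms(4,5) by (auto simp: openin_open)
  then have "openin (top_of_set C) (C \<inter> T)" "openin (top_of_set C) (C \<inter> T')"
    by (simp_all add: openin_open_Int)
  moreover have "C \<subseteq> (C \<inter> T) \<union> (C \<inter> T')" "(C \<inter> T) \<inter> (C \<inter> T') = {}" "C \<inter> T \<noteq> {}"
    using \<open>A = S \<inter> T\<close> \<open>S - A = S \<inter> T'\<close> \<open>C \<subseteq> S\<close> \<open>a \<in> C\<close> \<open>a \<in> A\<close> by blast+
  ultimately have "C \<inter> T' = {}"
    using \<open>connected C\<close> unfolding connected_local by blast
  then show "C \<subseteq> A"
    using \<open>A = S \<inter> T\<close> \<open>S - A = S \<inter> T'\<close> \<open>C \<subseteq> S\<close> by blast
qed

lemma Ints_iff_floor_eq_ceiling: "(t::real) \<in> \<int> \<longleftrightarrow> \<lfloor>t\<rfloor> = \<lceil>t\<rceil>"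
proof
  assume "\<lfloor>t\<rfloor> = \<lceil>t\<rceil>"
  then have "t = of_int \<lfloor>t\<rfloor>"
    using ceiling_altdef[of t] by (auto split: if_splits)
  then show "t \<in> \<int>"
    by (metis Ints_of_int)
qed (auto elim: Ints_cases)

lemma eventually_same_floor_ceiling_real:
  fixes t :: real
  shows "eventually (\<lambda>s. (s \<in> \<int> \<longleftrightarrow> t \<in> \<int>) \<longrightarrow> \<lfloor>s\<rfloor> = \<lfloor>t\<rfloor> \<and> \<lceil>s\<rceil> = \<lceil>t\<rceil>) (nhds t)"
proof (cases "t \<in> \<int>")
  case True
  have "eventually (\<lambda>s. s \<in> {t - 1<..<t + 1}) (nhds t)"
    by (intro eventually_nhds_in_open) auto
  then show ?thesis
  proof (rule eventually_mono)
    fix s assume "s \<in> {t - 1<..<t + 1}"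
    then have "s \<in> \<int> \<Longrightarrow> s = t"
      using Ints_eq_abs_less1[of s t] True by (auto simp: abs_less_iff)
    then show "(s \<in> \<int> \<longleftrightarrow> t \<in> \<int>) \<longrightarrow> \<lfloor>s\<rfloor> = \<lfloor>t\<rfloor> \<and> \<lceil>s\<rceil> = \<lceil>t\<rceil>"
      using True by auto
  qed
next
  case False
  then have t: "t \<in> {of_int \<lfloor>t\<rfloor><..<of_int \<lfloor>t\<rfloor> + 1}"
    using of_int_floor_le[of t] by (auto simp: order.order_iff_strict)
  then have ceiling_t: "\<lceil>t\<rceil> = \<lfloor>t\<rfloor> + 1"
    by (simp add: ceiling_eq_iff)
  from t have "eventually (\<lambda>s. s \<in> {of_int \<lfloor>t\<rfloor><..<of_int \<lfloor>t\<rfloor> + 1}) (nhds t)"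
    by (intro eventually_nhds_in_open) auto
  then show ?thesis
    by (rule eventually_mono) (auto simp: floor_eq_iff ceiling_eq_iff ceiling_t)
qed

lemma eventually_same_floor_ceiling:
  fixes x :: "real^'n"
  shows "eventually (\<lambda>y. (\<forall>i. y $ i \<in> \<int> \<longleftrightarrow> x $ i \<in> \<int>) \<longrightarrow>
    (\<forall>i. \<lfloor>y $ i\<rfloor> = \<lfloor>x $ i\<rfloor> \<and> \<lceil>y $ i\<rceil> = \<lceil>x $ i\<rceil>)) (nhds x)"
proof -
  have "eventually (\<lambda>y. (y $ i \<in> \<int> \<longleftrightarrow> x $ i \<in> \<int>) \<longrightarrow>
      \<lfloor>y $ i\<rfloor> = \<lfloor>x $ i\<rfloor> \<and> \<lceil>y $ i\<rceil> = \<lceil>x $ i\<rceil>) (nhds x)" for i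
    by (rule eventually_compose_filterlim[OF eventually_same_floor_ceiling_real])
      (intro tendsto_vec_nth filterlim_ident)
  then have "eventually (\<lambda>y. \<forall>i. (y $ i \<in> \<int> \<longleftrightarrow> x $ i \<in> \<int>) \<longrightarrow>
      \<lfloor>y $ i\<rfloor> = \<lfloor>x $ i\<rfloor> \<and> \<lceil>y $ i\<rceil> = \<lceil>x $ i\<rceil>) (nhds x)"
    by (simp add: eventually_all_finite)
  then show ?thesis
    by (rule eventually_mono) blast
qed

lemma cis_2pi_eq_iff: "cis (2 * pi * a) = cis (2 * pi * b) \<longleftrightarrow> a - b \<in> \<int>"
proof -
  have "cis (2 * pi * a) = cis (2 * pi * b) \<longleftrightarrow> (\<exists>n::int. 2 * pi * a = 2 * pi * b + 2 * pi * n)"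
    using sin_cos_eq_iff[of "2 * pi * a" "2 * pi * b"] by (auto simp: complex_eq_iff)
  also have "\<dots> \<longleftrightarrow> (\<exists>n::int. a - b = n)"
  proof (intro ex_cong1)
    fix n :: int
    have "2 * pi * a = 2 * pi * b + 2 * pi * n \<longleftrightarrow> 2 * pi * (a - b - n) = 0"
      by (auto simp: algebra_simps)
    then show "2 * pi * a = 2 * pi * b + 2 * pi * n \<longleftrightarrow> a - b = n"
      by simp
  qed
  also have "\<dots> \<longleftrightarrow> a - b \<in> \<int>"
    by (auto elim: Ints_cases)
  finally show ?thesis .
qed

lemma ofintv_nth [simp]: "ofintv m $ k = of_int (m $ k)"
  by (simp add: ofintv_def)

lemma ofintv_eq_0_iff [simp]: "ofintv m = 0 \<longleftrightarrow> m = 0"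
  by (simp add: vec_eq_iff)

lemma ofintv_axis [simp]: "ofintv (axis j 1) = axis j 1"
  by (simp add: vec_eq_iff axis_def)

lemma intvecs_eq_range_ofintv: "intvecs = range ofintv"
proof
  show "intvecs \<subseteq> range ofintv"
  proof
    fix x
    assume "x \<in> intvecs"
    then have "x = ofintv (\<chi> k. \<lfloor>x $ k\<rfloor>)"
      by (auto simp: intvecs_def vec_eq_iff elim!: Ints_cases)
    then show "x \<in> range ofintv" by blast
  qed
qed (auto simp: intvecs_def)

lemma intvecs_add: "x \<in> intvecs \<Longrightarrow> y \<in> intvecs \<Longrightarrow> x + y \<in> intvecs"
  by (simp add: intvecs_def)

lemma eventually_intvecs_eq_0: "eventually (\<lambda>y. y \<in> intvecs \<longrightarrow> y = 0) (nhds (0::real^'n))"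
  using eventually_same_floor_ceiling[of "0::real^'n"]
proof (rule eventually_mono)
  fix y :: "real^'n"
  assume same: "(\<forall>i. y $ i \<in> \<int> \<longleftrightarrow> 0 $ i \<in> \<int>) \<longrightarrow>
    (\<forall>i. \<lfloor>y $ i\<rfloor> = \<lfloor>0 $ i\<rfloor> \<and> \<lceil>y $ i\<rceil> = \<lceil>0 $ i\<rceil>)"
  show "y \<in> intvecs \<longrightarrow> y = 0"
  proof
    assume "y \<in> intvecs"
    then have "\<lfloor>y $ i\<rfloor> = 0 \<and> \<lceil>y $ i\<rceil> = 0" for i
      using same by (simp add: intvecs_def)
    then have "y $ i = 0" for i
      using of_int_floor_le[of "y $ i"] le_of_int_ceiling[of "y $ i"] by simp
    then show "y = 0"
      by (simp add: vec_eq_iff)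
  qed
qed

lemma dotR_eq_inner: "dotR v q = ofintv v \<bullet> q"
  by (simp add: dotR_def inner_vec_def)

lemma dotR_ofintv: "dotR v (ofintv m) = of_int (dotZ v m)"
  by (simp add: dotR_def dotZ_def)

lemma dotR_add: "dotR v (a + b) = dotR v a + dotR v b"
  by (simp add: dotR_eq_inner inner_add_right)

lemma nuR_nth [simp]: "nuR u q $ i = dotR (u i) q"
  by (simp add: nuR_def)

lemma linear_nuR: "linear (nuR u)"
  by (rule linearI) (simp_all add: vec_eq_iff dotR_eq_inner inner_add_right)

lemma linear_PR: "linear (PR P)"
  by (rule linearI) (simp_all add: PR_def vec_eq_iff sum.distrib sum_distrib_left algebra_simps)

lemma nuR_ofintv: "nuR u (ofintv m) = ofintv (nuZ u m)"
  by (simp add: vec_eq_iff dotR_ofintv nuZ_def)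

lemma PR_ofintv: "PR P (ofintv m) = ofintv (PZ P m)"
  by (simp add: vec_eq_iff PR_def PZ_def)

lemma nuR_intvecs: "q \<in> intvecs \<Longrightarrow> nuR u q \<in> intvecs"
  by (auto simp: intvecs_eq_range_ofintv nuR_ofintv)

lemma PR_intvecs: "q \<in> intvecs \<Longrightarrow> PR P q \<in> intvecs"
  by (auto simp: intvecs_eq_range_ofintv PR_ofintv)

lemma nuZ_uminus: "nuZ u (- m) = - nuZ u m"
  by (simp add: vec_eq_iff nuZ_def dotZ_def sum_negf)

lemma inj_nuR:
  assumes "span (range (\<lambda>i. ofintv (u i))) = UNIV"
  shows "inj (nuR u)"
proof -
  have "q = 0" if "nuR u q = 0" for q
  proof -
    have "orthogonal q y" if "y \<in> range (\<lambda>i. ofintv (u i))" for y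
      using that \<open>nuR u q = 0\<close>
      by (auto simp: orthogonal_def vec_eq_iff dotR_eq_inner inner_commute)
    then have "orthogonal q q"
      using orthogonal_to_span assms by blast
    then show ?thesis by (simp add: orthogonal_def)
  qed
  then show ?thesis
    using linear_nuR linear_inj_iff_eq_0 by blast
qed

lemma Lnu_eq_nuR_int_kernel: "Lnu u P = nuR u ` (intvecs \<inter> {l. PR P l = 0})"
proof -
  have "ofintv ` Lat P = intvecs \<inter> {l. PR P l = 0}"
    by (auto simp: Lat_def intvecs_eq_range_ofintv PR_ofintv)
  then show ?thesis
    by (simp add: Lnu_def image_image nuR_ofintv flip: \<open>ofintv ` Lat P = _\<close>)
qed

lemma span_intvecs: "span (intvecs :: (real^'n) set) = UNIV"
proof -
  have "(Basis :: (real^'n) set) \<subseteq> intvecs"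
    by (auto simp: Basis_vec_def intvecs_def axis_def)
  then show ?thesis
    using span_mono[of Basis intvecs] by auto
qed

lemma integral_retraction_kernel_PR:
  assumes "surj (PZ P)"
  obtains proj where "linear proj" "\<And>q. PR P (proj q) = 0" "\<And>q. PR P q = 0 \<Longrightarrow> proj q = q"
    "\<And>q. q \<in> intvecs \<Longrightarrow> proj q \<in> intvecs"
proof
  define s where "s j = inv (PZ P) (axis j 1)" for j
  have s: "PZ P (s j) = axis j 1" for j
    by (simp add: s_def surj_f_inv_f[OF assms])
  define proj where "proj q = q - (\<Sum>j\<in>UNIV. PR P q $ j *\<^sub>R ofintv (s j))" for q
  show "linear proj"
    by (rule linearI) (simp_all add: proj_def linear_add[OF linear_PR] linear_scale[OF linear_PR]
        scaleR_add_left sum.distrib scaleR_sum_right scaleR_diff_right)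
  show "PR P (proj q) = 0" for q
  proof -
    have "PR P (proj q) = PR P q - (\<Sum>j\<in>UNIV. PR P q $ j *\<^sub>R axis j 1)"
      by (simp add: proj_def linear_diff[OF linear_PR] linear_sum[OF linear_PR]
          linear_scale[OF linear_PR] PR_ofintv s)
    also have "\<dots> = 0"
      using basis_expansion[of "PR P q"] by (simp only: scalar_mult_eq_scaleR diff_self)
    finally show ?thesis .
  qed
  show "PR P q = 0 \<Longrightarrow> proj q = q" for q
    by (simp add: proj_def)
  show "q \<in> intvecs \<Longrightarrow> proj q \<in> intvecs" for q
    using PR_intvecs[of q P]
    by (auto simp: intvecs_def proj_def sum_component intro!: Ints_diff Ints_sum Ints_mult)
qed

lemma span_int_kernel_PR:
  assumes "surj (PZ P)"
  shows "span (intvecs \<inter> {l. PR P l = 0}) = {l. PR P l = 0}"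
proof
  show "span (intvecs \<inter> {l. PR P l = 0}) \<subseteq> {l. PR P l = 0}"
    by (rule span_minimal) (auto intro: linear_subspace_kernel[OF linear_PR])
next
  obtain proj where proj: "linear proj" "\<And>q. PR P (proj q) = 0" "\<And>q. PR P q = 0 \<Longrightarrow> proj q = q"
    "\<And>q. q \<in> intvecs \<Longrightarrow> proj q \<in> intvecs"
    using integral_retraction_kernel_PR[OF assms] by blast
  show "{l. PR P l = 0} \<subseteq> span (intvecs \<inter> {l. PR P l = 0})"
  proof
    fix q assume "q \<in> {l. PR P l = 0}"
    then have "q = proj q" by (simp add: proj(3))
    also have "\<dots> \<in> proj ` span intvecs"
      by (simp add: span_intvecs)
    also have "\<dots> = span (proj ` intvecs)"
      by (rule span_linear_image[OF proj(1), symmetric])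
    also have "\<dots> \<subseteq> span (intvecs \<inter> {l. PR P l = 0})"
      by (rule span_mono) (auto intro: proj(2,4))
    finally show "q \<in> span (intvecs \<inter> {l. PR P l = 0})" .
  qed
qed

lemma LR_eq_nuR_kernel:
  assumes "surj (PZ P)"
  shows "LR u P = nuR u ` {l. PR P l = 0}"
  by (simp add: LR_def Lnu_eq_nuR_int_kernel span_linear_image[OF linear_nuR]
      span_int_kernel_PR[OF assms])

lemma Lnu_subset_LR: "Lnu u P \<subseteq> LR u P"
  by (simp add: LR_def span_superset)

lemma Etor_eq_iff: "Etor q = Etor q' \<longleftrightarrow> q - q' \<in> intvecs"
  by (simp add: Etor_def vec_eq_iff cis_2pi_eq_iff intvecs_def)

lemma Etor_in_Tphi_iff: "Etor q \<in> Tphi P \<longleftrightarrow> PR P q \<in> intvecs"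
proof
  assume "Etor q \<in> Tphi P"
  then obtain q' where "PR P q' \<in> intvecs" "Etor q = Etor q'"
    by (auto simp: Tphi_def)
  then have "PR P (q - q') + PR P q' \<in> intvecs"
    by (intro intvecs_add PR_intvecs[of "q - q'"]) (simp_all add: Etor_eq_iff)
  then show "PR P q \<in> intvecs"
    by (simp add: linear_diff[OF linear_PR])
qed (auto simp: Tphi_def)

lemma Tphi_eq_Etor_kernel:
  assumes "surj (PZ P)"
  shows "Tphi P = Etor ` {l. PR P l = 0}"
proof
  show "Etor ` {l. PR P l = 0} \<subseteq> Tphi P"
    by (auto simp: Tphi_def intvecs_def)
  show "Tphi P \<subseteq> Etor ` {l. PR P l = 0}"
  proof
    fix w assume "w \<in> Tphi P"
    then obtain q n where q: "w = Etor q" "PR P q = ofintv n"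
      by (auto simp: Tphi_def intvecs_eq_range_ofintv)
    obtain m where "PZ P m = n"
      using surjD[OF assms] by metis
    then have "PR P (q - ofintv m) = 0"
      by (simp add: linear_diff[OF linear_PR] PR_ofintv q(2))
    moreover have "w = Etor (q - ofintv m)"
      by (simp add: q(1) Etor_eq_iff intvecs_eq_range_ofintv)
    ultimately show "w \<in> Etor ` {l. PR P l = 0}" by blast
  qed
qed

lemma arr_type_Etor: "arr_type u (Etor q) = {i. nuR u q $ i \<in> \<int>}"
proof -
  have "Etor q \<in> arr_subtorus u i \<longleftrightarrow> nuR u q $ i \<in> \<int>" for i
  proof
    assume "Etor q \<in> arr_subtorus u i"
    then obtain q' where "Etor q = Etor q'" "nuR u q' $ i \<in> \<int>"
      by (auto simp: arr_subtorus_def)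
    moreover from \<open>Etor q = Etor q'\<close> have "nuR u (q - q') \<in> intvecs"
      by (simp add: Etor_eq_iff nuR_intvecs)
    ultimately have "nuR u (q - q') $ i + nuR u q' $ i \<in> \<int>"
      by (simp add: intvecs_def)
    then show "nuR u q $ i \<in> \<int>"
      by (simp add: linear_diff[OF linear_nuR])
  qed (auto simp: arr_subtorus_def)
  then show ?thesis by (simp add: arr_type_def)
qed

text \<open>Since \<open>Arg\<close> is continuous at \<open>1\<close>, this is a continuous local inverse of \<open>Etor\<close> near
  \<open>Etor q\<close>.\<close>

definition Etor_lift :: "real^'d \<Rightarrow> complex^'d \<Rightarrow> real^'d" where
  "Etor_lift q w = q + (\<chi> k. Arg (w $ k / Etor q $ k) / (2 * pi))"

lemma Etor_Etor_lift: "Etor (Etor_lift q (Etor q')) = Etor q'"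
proof -
  have "cis (2 * pi * q $ k + Arg (cis (2 * pi * q' $ k) / cis (2 * pi * q $ k)))
      = cis (2 * pi * q' $ k)" for k
  proof -
    let ?z = "cis (2 * pi * q' $ k) / cis (2 * pi * q $ k)"
    have "cis (Arg ?z) = ?z"
      by (simp add: cis_Arg cis_divide)
    then show ?thesis
      by (simp flip: cis_mult)
  qed
  then show ?thesis
    by (simp add: Etor_def Etor_lift_def vec_eq_iff distrib_left)
qed

lemma tendsto_Etor_lift: "(Etor_lift q \<longlongrightarrow> q) (nhds (Etor q))"
proof -
  have "(Etor_lift q \<longlongrightarrow> q + (\<chi> k. Arg (Etor q $ k / Etor q $ k) / (2 * pi))) (nhds (Etor q))"
    unfolding Etor_lift_def [abs_def]
    by (intro tendsto_intros filterlim_ident) (simp_all add: Etor_def)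
  then show ?thesis
    by (simp add: Etor_def flip: zero_vec_def)
qed

lemma eventually_Etor_lift_kernel:
  assumes "PR P l = 0"
  shows "eventually (\<lambda>w. w \<in> Tphi P \<longrightarrow>
    Etor (Etor_lift l w) = w \<and> PR P (Etor_lift l w) = 0) (nhds (Etor l))"
proof -
  have "bounded_linear (PR P)"
    using linear_PR by (simp add: linear_conv_bounded_linear)
  have "((\<lambda>w. PR P (Etor_lift l w)) \<longlongrightarrow> 0) (nhds (Etor l))"
    using bounded_linear.tendsto[OF \<open>bounded_linear (PR P)\<close> tendsto_Etor_lift[of l]] assms
    by simp
  then have "eventually (\<lambda>w. PR P (Etor_lift l w) \<in> intvecs \<longrightarrow> PR P (Etor_lift l w) = 0)
      (nhds (Etor l))"
    by (rule eventually_compose_filterlim[OF eventually_intvecs_eq_0])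
  then show ?thesis
  proof (rule eventually_mono, intro impI)
    fix w
    assume small: "PR P (Etor_lift l w) \<in> intvecs \<longrightarrow> PR P (Etor_lift l w) = 0"
      and "w \<in> Tphi P"
    then obtain q where "w = Etor q"
      by (auto simp: Tphi_def)
    then have lift: "Etor (Etor_lift l w) = w"
      by (simp add: Etor_Etor_lift)
    then have "PR P (Etor_lift l w) \<in> intvecs"
      using \<open>w \<in> Tphi P\<close> Etor_in_Tphi_iff[of "Etor_lift l w" P] by simp
    with small lift show "Etor (Etor_lift l w) = w \<and> PR P (Etor_lift l w) = 0"
      by blast
  qed
qed

lemma std_cell_subset_LR: "std_cell u P p \<subseteq> LR u P"
  by (auto simp: std_cell_def)

lemma mem_std_cell_self: "p \<in> LR u P \<Longrightarrow> p \<in> std_cell u P p"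
  by (simp add: std_cell_def)

lemma std_cell_eq: "p' \<in> std_cell u P p \<Longrightarrow> std_cell u P p' = std_cell u P p"
  by (auto simp: std_cell_def)

lemma Ints_iff_std_cell:
  "p' \<in> std_cell u P p \<Longrightarrow> p' $ i \<in> \<int> \<longleftrightarrow> p $ i \<in> \<int>"
  by (simp add: std_cell_def Ints_iff_floor_eq_ceiling)

lemma psi_std_cell: "p' \<in> std_cell u P p \<Longrightarrow> psi p' = psi p"
  by (simp add: std_cell_def psi_def vec_eq_iff)

lemma std_cell_translate:
  assumes "v \<in> Lnu u P"
  shows "std_cell u P (p + v) = (\<lambda>x. x + v) ` std_cell u P p"
proof -
  have "v \<in> intvecs"
    using assms nuR_intvecs by (auto simp: Lnu_eq_nuR_int_kernel)
  then obtain n where n: "v = ofintv n"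
    by (auto simp: intvecs_eq_range_ofintv)
  have "v \<in> LR u P"
    using assms Lnu_subset_LR by blast
  then have LR_shift: "y \<in> LR u P \<longleftrightarrow> y - v \<in> LR u P" for y
    using subspace_add[of "LR u P" "y - v" v] subspace_diff[of "LR u P" y v]
    by (auto simp: LR_def)
  have "y \<in> std_cell u P (p + v) \<longleftrightarrow> y - v \<in> std_cell u P p" for y
  proof -
    have "\<lfloor>y $ i\<rfloor> = \<lfloor>p $ i + v $ i\<rfloor> \<longleftrightarrow> \<lfloor>y $ i - v $ i\<rfloor> = \<lfloor>p $ i\<rfloor>"
      "\<lceil>y $ i\<rceil> = \<lceil>p $ i + v $ i\<rceil> \<longleftrightarrow> \<lceil>y $ i - v $ i\<rceil> = \<lceil>p $ i\<rceil>" for i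
      by (simp_all add: n flip: floor_add_int) linarith+
    then show ?thesis
      by (simp add: std_cell_def LR_shift[of y])
  qed
  moreover have "y \<in> (\<lambda>x. x + v) ` std_cell u P p \<longleftrightarrow> y - v \<in> std_cell u P p" for y
    by (auto intro!: image_eqI[where x = "y - v"])
  ultimately show ?thesis
    by blast
qed

lemma convex_std_cell: "convex (std_cell u P p)"
proof -
  let ?C = "\<lambda>i. {t::real. \<lfloor>t\<rfloor> = \<lfloor>p $ i\<rfloor> \<and> \<lceil>t\<rceil> = \<lceil>p $ i\<rceil>}"
  have "convex (?C i)" for i
    unfolding is_interval_convex_1[symmetric] is_interval_1
  proof (intro ballI allI impI)
    fix a b x
    assume "a \<in> ?C i" "b \<in> ?C i" "a \<le> x \<and> x \<le> b"
    then show "x \<in> ?C i"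
      using floor_mono[of a x] floor_mono[of x b] ceiling_mono[of a x] ceiling_mono[of x b]
      by auto
  qed
  then have "convex ((\<lambda>y. y $ i) -` ?C i)" for i
    by (intro convex_linear_vimage bounded_linear.linear[OF bounded_linear_vec_nth])
  moreover have "std_cell u P p = LR u P \<inter> (\<Inter>i. (\<lambda>y. y $ i) -` ?C i)"
    by (auto simp: std_cell_def)
  moreover have "convex (LR u P)"
    by (simp add: LR_def subspace_imp_convex)
  ultimately show ?thesis
    by (auto intro!: convex_Int convex_INT)
qed

lemma hhl_divisor_eq_neg_psi_nuR: "hhl_divisor u l = - psi (nuR u l)"
  by (simp add: vec_eq_iff hhl_divisor_def psi_def floor_minus)

lemma hhl_divisor_std_cell: "nuR u l \<in> std_cell u P p \<Longrightarrow> hhl_divisor u l = - psi p"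
  by (simp add: hhl_divisor_eq_neg_psi_nuR psi_std_cell)

lemma hhl_divisor_add_ofintv: "hhl_divisor u (q + ofintv m) = hhl_divisor u q - nuZ u m"
  by (simp add: vec_eq_iff hhl_divisor_def dotR_add dotR_ofintv nuZ_def)

locale hhl_chart =
  fixes u :: "'r::finite \<Rightarrow> int^'d::finite" and P :: "int^'d^'e::finite"
    and g :: "real^'r \<Rightarrow> real^'d"
  assumes dual_surj: "surj (PZ P)"
    and linear_g: "linear g"
    and g_nuR [simp]: "\<And>l. g (nuR u l) = l"
begin

definition theta :: "real^'r \<Rightarrow> complex^'d" where
  "theta x = Etor (g x)"

lemma theta_nuR [simp]: "theta (nuR u l) = Etor l"
  by (simp add: theta_def)

lemma LR_eq: "LR u P = nuR u ` {l. PR P l = 0}"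
  by (rule LR_eq_nuR_kernel[OF dual_surj])

lemma LR_cases:
  assumes "x \<in> LR u P"
  obtains l where "PR P l = 0" "x = nuR u l"
  using assms by (auto simp: LR_eq)

lemma theta_LR: "theta ` LR u P = Tphi P"
  by (simp add: LR_eq Tphi_eq_Etor_kernel[OF dual_surj] image_image)

lemma theta_eq_iff:
  assumes "x \<in> LR u P" "y \<in> LR u P"
  shows "theta x = theta y \<longleftrightarrow> x - y \<in> Lnu u P"
proof -
  obtain l l' where l: "PR P l = 0" "x = nuR u l" and l': "PR P l' = 0" "y = nuR u l'"
    using assms by (auto elim!: LR_cases)
  have "x - y = nuR u (l - l')" and "PR P (l - l') = 0"
    using l l' by (simp_all add: linear_diff[OF linear_nuR] linear_diff[OF linear_PR])
  moreover have "nuR u (l - l') \<in> Lnu u P \<longleftrightarrow> l - l' \<in> intvecs \<and> PR P (l - l') = 0"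
    by (auto simp: Lnu_eq_nuR_int_kernel) (metis g_nuR)+
  ultimately show ?thesis
    by (simp add: l l' Etor_eq_iff)
qed

lemma arr_type_theta: "x \<in> LR u P \<Longrightarrow> arr_type u (theta x) = {i. x $ i \<in> \<int>}"
  by (auto elim!: LR_cases simp: arr_type_Etor)

lemma arr_type_theta_std_cell:
  assumes "x \<in> LR u P" "y \<in> std_cell u P x"
  shows "arr_type u (theta y) = arr_type u (theta x)"
proof -
  have "y \<in> LR u P"
    using assms(2) std_cell_subset_LR by blast
  then show ?thesis
    using Ints_iff_std_cell[OF assms(2)] by (simp add: arr_type_theta assms(1))
qed

lemma continuous_theta: "continuous_on UNIV theta"
proof -
  have "continuous_on UNIV g"
    using linear_g by (simp add: linear_continuous_on linear_conv_bounded_linear)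
  then show ?thesis
    unfolding theta_def Etor_def by (intro continuous_intros) auto
qed

lemma theta_std_cell_eq:
  assumes "x \<in> LR u P" "y \<in> LR u P" "theta y \<in> theta ` std_cell u P x"
  shows "theta ` std_cell u P y = theta ` std_cell u P x"
proof -
  obtain c where c: "c \<in> std_cell u P x" "theta y = theta c"
    using assms(3) by blast
  then have "y - c \<in> Lnu u P"
    using theta_eq_iff[OF assms(2), of c] std_cell_subset_LR by blast
  then have "std_cell u P y = (\<lambda>z. z + (y - c)) ` std_cell u P x"
    using std_cell_translate[of "y - c" u P c] std_cell_eq[OF c(1)] by simp
  moreover have "theta (z + (y - c)) = theta z" if "z \<in> std_cell u P x" for z
  proof -
    have "z \<in> LR u P" "y - c \<in> LR u P"
      using that std_cell_subset_LR \<open>y - c \<in> Lnu u P\<close> Lnu_subset_LR by blast+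
    then have "z + (y - c) \<in> LR u P"
      by (simp add: LR_def span_add)
    then show ?thesis
      using theta_eq_iff \<open>z \<in> LR u P\<close> \<open>y - c \<in> Lnu u P\<close> by simp
  qed
  ultimately show ?thesis
    by (auto simp: image_image cong: image_cong)
qed

lemma eventually_theta_std_cell:
  assumes "x \<in> LR u P"
  shows "eventually (\<lambda>w. w \<in> Tphi P \<and> arr_type u w = arr_type u (theta x) \<longrightarrow>
    w \<in> theta ` std_cell u P x) (nhds (theta x))"
proof -
  obtain l where l: "PR P l = 0" "x = nuR u l"
    using assms by (elim LR_cases)
  have "bounded_linear (nuR u)"
    using linear_nuR by (simp add: linear_conv_bounded_linear)
  have "((\<lambda>w. nuR u (Etor_lift l w)) \<longlongrightarrow> x) (nhds (Etor l))"
    using bounded_linear.tendsto[OF \<open>bounded_linear (nuR u)\<close> tendsto_Etor_lift[of l]] l(2)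
    by simp
  then have "eventually (\<lambda>w. (\<forall>i. nuR u (Etor_lift l w) $ i \<in> \<int> \<longleftrightarrow> x $ i \<in> \<int>) \<longrightarrow>
      (\<forall>i. \<lfloor>nuR u (Etor_lift l w) $ i\<rfloor> = \<lfloor>x $ i\<rfloor> \<and> \<lceil>nuR u (Etor_lift l w) $ i\<rceil> = \<lceil>x $ i\<rceil>))
      (nhds (Etor l))"
    by (rule eventually_compose_filterlim[OF eventually_same_floor_ceiling])
  moreover have "eventually (\<lambda>w. w \<in> Tphi P \<longrightarrow>
      Etor (Etor_lift l w) = w \<and> PR P (Etor_lift l w) = 0) (nhds (Etor l))"
    by (rule eventually_Etor_lift_kernel[OF l(1)])
  ultimately have "eventually (\<lambda>w. w \<in> Tphi P \<and> arr_type u w = arr_type u (theta x) \<longrightarrow>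
      w \<in> theta ` std_cell u P x) (nhds (Etor l))"
  proof (rule eventually_elim2, intro impI)
    fix w
    let ?l' = "Etor_lift l w"
    assume floors: "(\<forall>i. nuR u ?l' $ i \<in> \<int> \<longleftrightarrow> x $ i \<in> \<int>) \<longrightarrow>
        (\<forall>i. \<lfloor>nuR u ?l' $ i\<rfloor> = \<lfloor>x $ i\<rfloor> \<and> \<lceil>nuR u ?l' $ i\<rceil> = \<lceil>x $ i\<rceil>)"
      and "w \<in> Tphi P \<longrightarrow> Etor ?l' = w \<and> PR P ?l' = 0"
      and w: "w \<in> Tphi P \<and> arr_type u w = arr_type u (theta x)"
    then have lift: "Etor ?l' = w" "PR P ?l' = 0"
      by blast+
    then have "nuR u ?l' \<in> LR u P"
      by (simp add: LR_eq)
    moreover have "\<forall>i. nuR u ?l' $ i \<in> \<int> \<longleftrightarrow> x $ i \<in> \<int>"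
      using w lift(1) arr_type_theta[OF assms] arr_type_Etor[of u ?l'] by (simp add: set_eq_iff)
    ultimately have "nuR u ?l' \<in> std_cell u P x"
      using floors by (simp add: std_cell_def)
    moreover have "theta (nuR u ?l') = w"
      using lift by simp
    ultimately show "w \<in> theta ` std_cell u P x"
      by (metis image_eqI)
  qed
  then show ?thesis
    by (simp add: l(2))
qed

lemma openin_theta_std_cell:
  assumes "x \<in> LR u P"
  shows "openin (top_of_set {w \<in> Tphi P. arr_type u w = arr_type u (theta x)})
    (theta ` std_cell u P x)"
proof (rule openin_top_of_set_eventually)
  show "theta ` std_cell u P x \<subseteq> {w \<in> Tphi P. arr_type u w = arr_type u (theta x)}"
    using assms std_cell_subset_LR theta_LR arr_type_theta_std_cell by blast
next
  fix w assume "w \<in> theta ` std_cell u P x"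
  then obtain y where y: "y \<in> std_cell u P x" "w = theta y"
    by blast
  have "y \<in> LR u P"
    using y(1) std_cell_subset_LR by blast
  moreover have "std_cell u P y = std_cell u P x"
    by (rule std_cell_eq[OF y(1)])
  moreover have "arr_type u (theta y) = arr_type u (theta x)"
    by (rule arr_type_theta_std_cell[OF assms y(1)])
  ultimately show "eventually (\<lambda>w'. w' \<in> {w \<in> Tphi P. arr_type u w = arr_type u (theta x)} \<longrightarrow>
      w' \<in> theta ` std_cell u P x) (nhds w)"
    using eventually_theta_std_cell[of y] by (simp add: y(2))
qed

lemma openin_Diff_theta_std_cell:
  assumes "p \<in> LR u P"
  defines "S \<equiv> {w \<in> Tphi P. arr_type u w = arr_type u (theta p)}"
  shows "openin (top_of_set S) (S - theta ` std_cell u P p)"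
  unfolding openin_subopen[of _ "S - theta ` std_cell u P p"]
proof
  fix w assume w: "w \<in> S - theta ` std_cell u P p"
  then have "w \<in> theta ` LR u P"
    by (simp add: S_def theta_LR)
  then obtain y where y: "y \<in> LR u P" "w = theta y"
    by blast
  then have S_y: "S = {w \<in> Tphi P. arr_type u w = arr_type u (theta y)}"
    using w by (simp add: S_def)
  have "theta ` std_cell u P y \<inter> theta ` std_cell u P p = {}"
  proof (rule ccontr)
    assume "theta ` std_cell u P y \<inter> theta ` std_cell u P p \<noteq> {}"
    then obtain c where c: "c \<in> std_cell u P y" "theta c \<in> theta ` std_cell u P p"
      by blast
    moreover have "c \<in> LR u P"
      using c(1) std_cell_subset_LR by blast
    ultimately have "theta ` std_cell u P c = theta ` std_cell u P p"
      by (intro theta_std_cell_eq assms)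
    then have "theta ` std_cell u P y = theta ` std_cell u P p"
      by (simp add: std_cell_eq[OF c(1)])
    then show False
      using w y mem_std_cell_self[OF y(1)] by blast
  qed
  moreover have T_open: "openin (top_of_set S) (theta ` std_cell u P y)"
    unfolding S_y by (rule openin_theta_std_cell[OF y(1)])
  moreover have "theta ` std_cell u P y \<subseteq> S"
    using openin_imp_subset[OF T_open] .
  moreover have "w \<in> theta ` std_cell u P y"
    using y mem_std_cell_self by blast
  ultimately show "\<exists>T. openin (top_of_set S) T \<and> w \<in> T \<and> T \<subseteq> S - theta ` std_cell u P p"
    by blast
qed

lemma theta_std_cell_eq_hhl_stratum:
  assumes "p \<in> LR u P"
  shows "theta ` std_cell u P p = hhl_stratum u P (theta p)"
proof -
  let ?S = "{w \<in> Tphi P. arr_type u w = arr_type u (theta p)}"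
  have open_cell: "openin (top_of_set ?S) (theta ` std_cell u P p)"
    by (rule openin_theta_std_cell[OF assms])
  have "connected (theta ` std_cell u P p)"
    by (intro connected_continuous_image convex_connected convex_std_cell
        continuous_on_subset[OF continuous_theta]) simp
  moreover have "theta p \<in> theta ` std_cell u P p"
    using assms by (simp add: mem_std_cell_self)
  moreover have "theta ` std_cell u P p \<subseteq> ?S"
    using openin_imp_subset[OF open_cell] .
  moreover note open_cell
  ultimately have "connected_component_set ?S (theta p) = theta ` std_cell u P p"
    using openin_Diff_theta_std_cell[OF assms] by (rule connected_component_eq_clopen)
  then show ?thesis
    by (simp add: hhl_stratum_def)
qed

lemma same_line_bundle_theta_std_cell:
  assumes "Etor q \<in> theta ` std_cell u P p"
  shows "same_line_bundle u (hhl_divisor u q) (- psi p)"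
proof -
  obtain c where c: "c \<in> std_cell u P p" "Etor q = theta c"
    using assms by blast
  then obtain l where l: "PR P l = 0" "c = nuR u l"
    using std_cell_subset_LR by (blast elim: LR_cases)
  have "q - l \<in> intvecs"
    using c l by (simp add: Etor_eq_iff)
  then obtain m where "q - l = ofintv m"
    by (auto simp: intvecs_eq_range_ofintv)
  then have q: "q = l + ofintv m"
    by (metis add.commute diff_add_cancel)
  have "hhl_divisor u q = hhl_divisor u l - nuZ u m"
    by (simp add: q hhl_divisor_add_ofintv)
  also have "\<dots> = - psi p - nuZ u m"
    using c(1) by (simp add: hhl_divisor_std_cell l(2))
  finally have "hhl_divisor u q - - psi p = nuZ u (- m)"
    by (simp add: nuZ_uminus)
  then show ?thesis
    by (auto simp: same_line_bundle_def)
qed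

end

theorem lemma4p1:
  fixes u :: "'r::finite \<Rightarrow> int^'d::finite"
    and \<Sigma> :: "'r set set"
    and P :: "int^'d^'e::finite"
  assumes rays_prim: "\<forall>i. primitive (u i)"
    and rays_distinct: "inj u"
    and fan: "smooth_fan u \<Sigma>"
    and no_torus_factors: "span (range (\<lambda>i. ofintv (u i))) = UNIV"
    and dual_surj: "surj (PZ P)"
  shows "LR u P = nuR u ` {l. PR P l = 0} \<and>
    (\<exists>\<theta> :: real^'r \<Rightarrow> complex^'d.
       (\<forall>l. PR P l = 0 \<longrightarrow> \<theta> (nuR u l) = Etor l) \<and>
       \<theta> ` LR u P = Tphi P \<and>
       (\<forall>p\<in>LR u P. \<forall>p'\<in>LR u P. \<theta> p = \<theta> p' \<longleftrightarrow> p - p' \<in> Lnu u P) \<and>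
       (\<forall>p\<in>LR u P. \<theta> ` std_cell u P p = hhl_stratum u P (\<theta> p)) \<and>
       (\<forall>p\<in>LR u P. \<forall>q. Etor q \<in> \<theta> ` std_cell u P p \<longrightarrow>
            same_line_bundle u (hhl_divisor u q) (- psi p)) \<and>
       (\<forall>p\<in>LR u P. \<forall>l. PR P l = 0 \<and> nuR u l \<in> std_cell u P p \<longrightarrow>
            hhl_divisor u l = - psi p))"
proof -
  obtain g where "linear g" "g \<circ> nuR u = id"
    using linear_injective_left_inverse[OF linear_nuR inj_nuR[OF no_torus_factors]] by blast
  then interpret hhl_chart u P g
    by (intro hhl_chart.intro dual_surj \<open>linear g\<close>) (rule pointfree_idE)
  show ?thesis
    using theta_LR theta_eq_iff theta_std_cell_eq_hhl_stratum same_line_bundle_theta_std_cell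
      hhl_divisor_std_cell
    by (intro conjI exI[of _ theta] LR_eq) auto
qed

end
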